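(* Let $n\in\mathbb{N}$, $h_0>0$, $h_1,\ldots,h_n\in\mathbb{C}$, and $H(z)\coloneq h_0+2\sum_{k=1}^nh_kz^k$. There is exactly one such polynomial $H$ (for given $h_0$) satisfying all of: $\operatorname{Re}H(z)>0$ for all $z\in\Delta$; $h_n>0$; all $n$ roots of $H$ lie on the unit circle $\{|z|=1\}$. Namely, $H(z)=h_0(1+z^n)$.
   Context: $\Delta=\{z\in\mathbb{C}:|z|<1\}$ is the open unit disk. *)

theory Defs
  imports "HOL-Analysis.Analysis"
begin

definition Hpoly :: "nat \<Rightarrow> real \<Rightarrow> (nat \<Rightarrow> complex) \<Rightarrow> complex \<Rightarrow> complex" where
  "Hpoly n h0 h z = complex_of_real h0 + 2 * (\<Sum>k=1..n. h k * z ^ k)"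

end

theory Submission
  imports Defs "HOL-Computational_Algebra.Fundamental_Theorem_Algebra"
begin

(* If all roots of H lie on the unit circle, then |h0| = |2 h_n| (Vieta), so h_n = h0/2.
   For |xi| = 1, averaging Re H * conj(z)^m over the n points z with z^n = xi^n isolates
   h_m + conj(h_(n-m)) conj(w), w = xi^n, while the plain average of Re H >= 0 over the same
   points is h0 (1 + Re w). Hence |h_m + conj(h_(n-m)) conj(w)| <= h0 (1 + Re w) on the whole
   circle (Re H >= 0 there by continuity), and letting w tend to -1 forces h_m = 0 for
   0 < m < n. *)

lemma sum_roots_unity_power:
  assumes "n > 0"
  shows "(\<Sum>j<n. cis (2 * pi * real j / n) ^ d) = (if n dvd d then of_nat n else 0)"
proof -
  define \<omega> where "\<omega> = cis (2 * pi * d / n)"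
  have powers: "cis (2 * pi * j / n) ^ d = \<omega> ^ j" for j :: nat
    by (simp add: \<omega>_def Complex.DeMoivre mult_ac)
  show ?thesis
  proof (cases "n dvd d")
    case True
    then obtain q where "d = n * q" by blast
    then have "2 * pi * real d / n = 2 * pi * real q"
      using assms by simp
    then have "\<omega> = 1"
      unfolding \<omega>_def by (metis Ints_of_nat cis_multiple_2pi)
    then show ?thesis
      using True by (simp add: powers)
  next
    case False
    have "\<omega> \<noteq> 1"
    proof
      assume "\<omega> = 1"
      then obtain k :: int where "2 * pi * d / n = of_int k * 2 * pi"
        by (auto simp: \<omega>_def complex_eq_iff cos_one_2pi_int)
      then have "real_of_int (int d) = real_of_int (k * int n)"
        using assms by (simp add: field_simps)
      then show False
        using False by (metis of_int_eq_iff dvd_triv_right int_dvd_int_iff)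
    qed
    moreover have "\<omega> ^ n = 1"
      using assms by (simp add: \<omega>_def Complex.DeMoivre)
    ultimately show ?thesis
      using False by (simp add: powers geometric_sum)
  qed
qed

definition rotated_root :: "nat \<Rightarrow> complex \<Rightarrow> nat \<Rightarrow> complex" where
  "rotated_root n \<xi> j = \<xi> * cis (2 * pi * real j / n)"

lemma norm_rotated_root: "cmod \<xi> = 1 \<Longrightarrow> cmod (rotated_root n \<xi> j) = 1"
  by (simp add: rotated_root_def norm_mult)

lemma rotated_root_power: "n > 0 \<Longrightarrow> rotated_root n \<xi> j ^ n = \<xi> ^ n"
  by (simp add: rotated_root_def power_mult_distrib Complex.DeMoivre)

lemma sum_rotated_roots_monomials:
  assumes "n > 0" and "finite K"
  shows "(\<Sum>j<n. \<Sum>k\<in>K. c k * rotated_root n \<xi> j ^ e k)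
       = of_nat n * (\<Sum>k | k \<in> K \<and> n dvd e k. c k * \<xi> ^ e k)"
proof -
  have "(\<Sum>j<n. \<Sum>k\<in>K. c k * rotated_root n \<xi> j ^ e k)
      = (\<Sum>k\<in>K. c k * \<xi> ^ e k * (\<Sum>j<n. cis (2 * pi * real j / n) ^ e k))"
    by (subst sum.swap)
      (simp add: rotated_root_def power_mult_distrib sum_distrib_left mult.assoc)
  also have "\<dots> = (\<Sum>k\<in>K. if n dvd e k then of_nat n * (c k * \<xi> ^ e k) else 0)"
    using assms(1) by (intro sum.cong) (auto simp: sum_roots_unity_power)
  also have "\<dots> = of_nat n * (\<Sum>k | k \<in> K \<and> n dvd e k. c k * \<xi> ^ e k)"
    using assms(2) by (simp add: sum.If_cases sum_distrib_left Int_def conj_commute)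
  finally show ?thesis .
qed

lemma Collect_le_dvd_add_eq:
  fixes n e :: nat
  assumes "0 < e" and "e < n"
  shows "{k. k \<le> n \<and> n dvd k + e} = {n - e}"
proof -
  have "n dvd k + e \<longleftrightarrow> k + e = n" if "k \<le> n" for k
  proof
    assume "n dvd k + e"
    then obtain q where q: "k + e = n * q" by blast
    have "n * q < n * 2"
      using q assms that by linarith
    then have "q < 2" by simp
    moreover have "q \<noteq> 0"
      using q assms(1) by (metis add_is_0 mult_0_right not_gr0)
    ultimately show "k + e = n"
      using q by (cases q) auto
  qed simp
  then show ?thesis
    using assms by auto
qed

lemma Collect_le_dvd_eq:
  fixes n :: nat
  assumes "0 < n"
  shows "{k. k \<le> n \<and> n dvd k} = {0, n}"
  using assms by (auto dest: dvd_imp_le)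

lemma unimodular_cnj_power:
  assumes "cmod z = 1" and "m \<le> n"
  shows "cnj z ^ m = cnj (z ^ n) * z ^ (n - m)"
proof -
  have "cnj (z ^ n) * z ^ (n - m) = cnj z ^ m * (cnj z * z) ^ (n - m)"
    using assms(2) by (simp add: power_mult_distrib mult.assoc flip: power_add)
  also have "cnj z * z = 1"
    using assms(1) by (simp add: mult.commute flip: complex_norm_square)
  finally show ?thesis by simp
qed

lemma unimodular_nth_root:
  assumes "n > 0" and "cmod w = 1"
  obtains \<xi> where "cmod \<xi> = 1" and "\<xi> ^ n = w"
proof
  show "cmod (cis (Arg w / n)) = 1" by simp
  have "cis (Arg w / n) ^ n = cis (Arg w)"
    using assms(1) by (simp add: Complex.DeMoivre)
  also have "\<dots> = sgn w"
    using assms(2) by (intro cis_Arg) auto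
  also have "\<dots> = w"
    using assms(2) by (simp add: sgn_div_norm)
  finally show "cis (Arg w / n) ^ n = w" .
qed

(* Taking w = -1 gives b = a; near w = -1 the left side is then |a| |1 + w|, while the right
   side is c |1 + w|^2 / 2. *)
lemma eq_0_if_norm_add_cnj_le:
  fixes a b :: complex and c :: real
  assumes le: "\<And>w. cmod w = 1 \<Longrightarrow> cmod (a + b * cnj w) \<le> c * (1 + Re w)"
  shows "a = 0"
proof -
  have "b = a"
    using le[of "-1"] by simp
  have bound: "cmod a \<le> c / 2 * cmod (1 - cis t)" if t: "0 < t" "t < pi" for t
  proof -
    define d where "d = cmod (1 - cis t)"
    have "d > 0"
      using sin_gt_zero[OF t] by (auto simp: d_def complex_eq_iff)
    have d_sq: "d\<^sup>2 = 2 * (1 - cos t)"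
      unfolding d_def cmod_power2 by (simp add: power2_diff sin_squared_eq)
    have "a + b * cnj (- cis t) = a * cnj (1 - cis t)"
      by (simp add: \<open>b = a\<close> algebra_simps)
    then have "cmod a * d = cmod (a + b * cnj (- cis t))"
      by (simp only: d_def norm_mult complex_mod_cnj)
    also have "\<dots> \<le> c / 2 * d\<^sup>2"
      using le[of "- cis t"] unfolding d_sq by (simp add: algebra_simps)
    finally show ?thesis
      using \<open>d > 0\<close> by (simp add: power2_eq_square mult.assoc[symmetric] d_def)
  qed
  have "((\<lambda>t. c / 2 * cmod (1 - cis t)) \<longlongrightarrow> c / 2 * cmod (1 - cis 0)) (at_right 0)"
    by (intro tendsto_intros)
  moreover have "\<forall>\<^sub>F t in at_right 0. cmod a \<le> c / 2 * cmod (1 - cis t)"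
    using bound by (auto simp: eventually_at_right_field intro!: exI[of _ pi])
  ultimately have "cmod a \<le> c / 2 * cmod (1 - cis 0)"
    by (rule tendsto_lowerbound) simp
  then show ?thesis by simp
qed

lemma Re_one_plus_power_pos:
  assumes "n > 0" and "cmod z < 1"
  shows "0 < Re (1 + z ^ n)"
proof -
  have "cmod z ^ n < 1"
    using assms by (simp add: power_less_one_iff)
  then have "\<bar>Re (z ^ n)\<bar> < 1"
    using abs_Re_le_cmod[of "z ^ n"] by (simp add: norm_power)
  then show ?thesis by simp
qed

lemma norm_eq_1_if_power_eq_minus_1:
  assumes "z ^ n = -1"
  shows "cmod z = 1"
proof -
  have "n > 0"
    using assms by (intro gr0I) simp
  moreover have "cmod z ^ n = 1"
    using assms by (simp flip: norm_power)
  ultimately show ?thesis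
    using power_eq_imp_eq_base[of "cmod z" n 1] by simp
qed

lemma norm_coeff_0_eq_norm_lead_coeff:
  fixes p :: "complex poly"
  assumes roots: "\<And>z. poly p z = 0 \<Longrightarrow> cmod z = 1"
  shows "cmod (coeff p 0) = cmod (lead_coeff p)"
proof -
  obtain r where r: "smult (lead_coeff p) (\<Prod>i<degree p. [:-r i, 1:]) = p"
    by (rule complex_poly_decompose')
  have poly_p: "poly p z = lead_coeff p * (\<Prod>i<degree p. z - r i)" for z
    by (subst r[symmetric]) (simp add: poly_prod)
  have "cmod (r i) = 1" if "i < degree p" for i
    using that by (intro roots) (auto simp: poly_p)
  moreover have "coeff p 0 = lead_coeff p * (\<Prod>i<degree p. - r i)"
    using poly_p[of 0] by (simp add: poly_0_coeff_0)
  ultimately show ?thesis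
    by (simp add: norm_mult prod_norm[symmetric])
qed

definition Hcoeff :: "real \<Rightarrow> (nat \<Rightarrow> complex) \<Rightarrow> nat \<Rightarrow> complex" where
  "Hcoeff h0 h k = (if k = 0 then complex_of_real h0 else 2 * h k)"

lemma Hpoly_conv_sum: "Hpoly n h0 h z = (\<Sum>k\<le>n. Hcoeff h0 h k * z ^ k)"
  by (simp add: Hpoly_def Hcoeff_def atMost_atLeast0 sum.atLeast_Suc_atMost
      sum_distrib_left mult.assoc)

definition Hpoly_poly :: "nat \<Rightarrow> real \<Rightarrow> (nat \<Rightarrow> complex) \<Rightarrow> complex poly" where
  "Hpoly_poly n h0 h = (\<Sum>k\<le>n. monom (Hcoeff h0 h k) k)"

lemma poly_Hpoly_poly: "poly (Hpoly_poly n h0 h) = Hpoly n h0 h"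
  by (simp add: fun_eq_iff Hpoly_poly_def Hpoly_conv_sum poly_sum poly_monom)

lemma coeff_Hpoly_poly: "coeff (Hpoly_poly n h0 h) k = (if k \<le> n then Hcoeff h0 h k else 0)"
  by (simp add: Hpoly_poly_def coeff_sum)

lemma Hpoly_top_coeff_if_roots_unimodular:
  assumes "n \<ge> 1" and "h0 > 0" and "Im (h n) = 0" and "Re (h n) > 0"
    and roots: "\<And>z. Hpoly n h0 h z = 0 \<Longrightarrow> cmod z = 1"
  shows "h n = complex_of_real (h0 / 2)"
proof -
  define p where "p = Hpoly_poly n h0 h"
  have "h n \<noteq> 0"
    using assms(4) by auto
  then have "degree p = n"
    using assms(1) by (intro antisym degree_le le_degree)
      (auto simp: p_def coeff_Hpoly_poly Hcoeff_def)
  have "cmod (coeff p 0) = cmod (lead_coeff p)"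
    by (intro norm_coeff_0_eq_norm_lead_coeff) (simp add: p_def poly_Hpoly_poly roots)
  then have "h0 = 2 * cmod (h n)"
    using assms(1,2) \<open>degree p = n\<close> by (simp add: p_def coeff_Hpoly_poly Hcoeff_def norm_mult)
  then show ?thesis
    using assms(3,4) by (simp add: complex_eq_iff cmod_def)
qed

lemma Hpoly_top_coeff_if_eq:
  assumes "n \<ge> 1" and "\<And>z. Hpoly n h0 h z = complex_of_real h0 * (1 + z ^ n)"
  shows "h n = complex_of_real (h0 / 2)"
proof -
  have "poly (Hpoly_poly n h0 h) = poly ([:complex_of_real h0:] + monom (complex_of_real h0) n)"
    using assms(2) by (simp add: fun_eq_iff poly_Hpoly_poly poly_monom algebra_simps)
  then have "coeff (Hpoly_poly n h0 h) n = coeff ([:complex_of_real h0:] + monom (complex_of_real h0) n) n"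
    by (simp add: poly_eq_poly_eq_iff)
  then show ?thesis
    using assms(1) by (cases n) (simp_all add: coeff_Hpoly_poly Hcoeff_def mult.commute)
qed

lemma Hpoly_eq_if_coeffs:
  assumes "n \<ge> 1" and hn: "h n = complex_of_real (h0 / 2)"
    and hm: "\<And>m. 1 \<le> m \<Longrightarrow> m < n \<Longrightarrow> h m = 0"
  shows "Hpoly n h0 h z = complex_of_real h0 * (1 + z ^ n)"
proof -
  have "(\<Sum>k=1..n. h k * z ^ k) = (\<Sum>k=1..n. if k = n then h n * z ^ n else 0)"
    by (rule sum.cong) (auto simp: hm)
  also have "\<dots> = h n * z ^ n"
    using assms(1) by simp
  finally show ?thesis
    unfolding Hpoly_def hn by (simp add: algebra_simps)
qed

lemma Re_Hpoly_nonneg_on_circle: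
  assumes "\<And>z. cmod z < 1 \<Longrightarrow> 0 < Re (Hpoly n h0 h z)" and "cmod z = 1"
  shows "0 \<le> Re (Hpoly n h0 h z)"
proof -
  have "continuous_on (closure (ball 0 1)) (\<lambda>z. Re (Hpoly n h0 h z))"
    unfolding Hpoly_def by (intro continuous_intros)
  then show ?thesis
    by (rule continuous_ge_on_closure) (use assms in \<open>auto intro: less_imp_le\<close>)
qed

lemma sum_Hpoly_rotated_roots:
  assumes "n > 0"
  shows "(\<Sum>j<n. Hpoly n h0 h (rotated_root n \<xi> j) * rotated_root n \<xi> j ^ e)
       = of_nat n * (\<Sum>k | k \<le> n \<and> n dvd k + e. Hcoeff h0 h k * \<xi> ^ (k + e))"
  using sum_rotated_roots_monomials[OF assms, of "{..n}" "Hcoeff h0 h" \<xi> "\<lambda>k. k + e"]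
  by (simp add: Hpoly_conv_sum sum_distrib_right power_add mult.assoc)

lemma sum_Hpoly_rotated_roots_0:
  assumes "n > 0"
  shows "(\<Sum>j<n. Hpoly n h0 h (rotated_root n \<xi> j)) = of_nat n * (h0 + 2 * h n * \<xi> ^ n)"
  using sum_Hpoly_rotated_roots[OF assms, of h0 h \<xi> 0] assms
  by (simp add: Collect_le_dvd_eq Hcoeff_def)

lemma sum_Re_Hpoly_rotated_roots_cnj_power:
  assumes m: "1 \<le> m" "m < n" and \<xi>: "cmod \<xi> = 1"
  shows "(\<Sum>j<n. complex_of_real (Re (Hpoly n h0 h (rotated_root n \<xi> j)))
                  * cnj (rotated_root n \<xi> j) ^ m)
       = of_nat n * (h m + cnj (h (n - m)) * cnj (\<xi> ^ n))"
proof -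
  define z where "z = rotated_root n \<xi>"
  define H where "H = Hpoly n h0 h"
  have n: "n > 0"
    using m by simp
  have "{k. k \<le> n \<and> n dvd k + (n - m)} = {m}" and "{k. k \<le> n \<and> n dvd k + m} = {n - m}"
    using Collect_le_dvd_add_eq[of "n - m" n] Collect_le_dvd_add_eq[of m n] m by auto
  then have sum_nm: "(\<Sum>j<n. H (z j) * z j ^ (n - m)) = 2 * of_nat n * h m * \<xi> ^ n"
    and sum_m: "(\<Sum>j<n. H (z j) * z j ^ m) = 2 * of_nat n * h (n - m) * \<xi> ^ n"
    using m unfolding z_def H_def sum_Hpoly_rotated_roots[OF n] by (simp_all add: Hcoeff_def)
  have Re_times_cnj_power: "complex_of_real (Re w) * cnj (z j) ^ m
      = (cnj (\<xi> ^ n) * (w * z j ^ (n - m)) + cnj (w * z j ^ m)) / 2" for w j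
  proof -
    have "cnj (z j) ^ m = cnj (z j ^ n) * z j ^ (n - m)"
      unfolding z_def by (rule unimodular_cnj_power[OF norm_rotated_root[OF \<xi>]]) (use m in simp)
    also have "z j ^ n = \<xi> ^ n"
      unfolding z_def by (rule rotated_root_power[OF n])
    finally have cnj_power: "cnj (z j) ^ m = cnj (\<xi> ^ n) * z j ^ (n - m)" .
    have Re_eq: "complex_of_real (Re w) = (w + cnj w) / 2"
      by (simp add: complex_add_cnj)
    show ?thesis
      by (simp add: Re_eq cnj_power field_simps)
  qed
  have "\<xi> ^ n * cnj \<xi> ^ n = 1"
    using \<xi> by (simp add: norm_power flip: power_mult_distrib complex_norm_square)
  have "(\<Sum>j<n. complex_of_real (Re (H (z j))) * cnj (z j) ^ m)
      = (cnj (\<xi> ^ n) * (\<Sum>j<n. H (z j) * z j ^ (n - m)) + cnj (\<Sum>j<n. H (z j) * z j ^ m)) / 2"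
    by (simp only: Re_times_cnj_power sum_divide_distrib[symmetric] sum.distrib
        sum_distrib_left cnj_sum)
  also have "\<dots> = of_nat n * (h m + cnj (h (n - m)) * cnj (\<xi> ^ n))"
    using \<open>\<xi> ^ n * cnj \<xi> ^ n = 1\<close> by (simp add: sum_nm sum_m field_simps)
  finally show ?thesis
    unfolding z_def H_def .
qed

lemma Hpoly_coeff_bound:
  assumes m: "1 \<le> m" "m < n" and \<xi>: "cmod \<xi> = 1"
    and hn: "h n = complex_of_real (h0 / 2)"
    and nonneg: "\<forall>z. cmod z = 1 \<longrightarrow> 0 \<le> Re (Hpoly n h0 h z)"
  shows "cmod (h m + cnj (h (n - m)) * cnj (\<xi> ^ n)) \<le> h0 * (1 + Re (\<xi> ^ n))"
proof -
  define z where "z = rotated_root n \<xi>"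
  define H where "H = Hpoly n h0 h"
  have n: "n > 0"
    using m by simp
  have "of_nat n * cmod (h m + cnj (h (n - m)) * cnj (\<xi> ^ n))
      = cmod (\<Sum>j<n. complex_of_real (Re (H (z j))) * cnj (z j) ^ m)"
    unfolding z_def H_def sum_Re_Hpoly_rotated_roots_cnj_power[OF m \<xi>] by (simp add: norm_mult)
  also have "\<dots> \<le> (\<Sum>j<n. cmod (complex_of_real (Re (H (z j))) * cnj (z j) ^ m))"
    by (rule norm_sum)
  also have "\<dots> = Re (\<Sum>j<n. H (z j))"
    using nonneg norm_rotated_root[OF \<xi>]
    by (simp add: z_def H_def Re_sum norm_mult norm_power)
  also have "\<dots> = of_nat n * (h0 * (1 + Re (\<xi> ^ n)))"
    unfolding z_def H_def sum_Hpoly_rotated_roots_0[OF n] hn by (simp add: algebra_simps)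
  finally show ?thesis
    using n by simp
qed

lemma Hpoly_coeff_eq_0:
  assumes m: "1 \<le> m" "m < n"
    and hn: "h n = complex_of_real (h0 / 2)"
    and nonneg: "\<forall>z. cmod z = 1 \<longrightarrow> 0 \<le> Re (Hpoly n h0 h z)"
  shows "h m = 0"
proof (rule eq_0_if_norm_add_cnj_le)
  fix w :: complex
  assume "cmod w = 1"
  moreover have "n > 0"
    using m by simp
  ultimately obtain \<xi> where "cmod \<xi> = 1" and "\<xi> ^ n = w"
    by (blast intro: unimodular_nth_root)
  then show "cmod (h m + cnj (h (n - m)) * cnj w) \<le> h0 * (1 + Re w)"
    using Hpoly_coeff_bound[OF m _ hn nonneg] by blast
qed

theorem mainTheorem5:
  fixes n :: nat and h0 :: real and h :: "nat \<Rightarrow> complex"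
  assumes "n \<ge> 1" and "h0 > 0"
  shows "((\<forall>z. cmod z < 1 \<longrightarrow> Re (Hpoly n h0 h z) > 0)
          \<and> Im (h n) = 0 \<and> Re (h n) > 0
          \<and> (\<forall>z. Hpoly n h0 h z = 0 \<longrightarrow> cmod z = 1))
       \<longleftrightarrow> (\<forall>z. Hpoly n h0 h z = complex_of_real h0 * (1 + z ^ n))"
proof
  assume "(\<forall>z. cmod z < 1 \<longrightarrow> Re (Hpoly n h0 h z) > 0)
          \<and> Im (h n) = 0 \<and> Re (h n) > 0
          \<and> (\<forall>z. Hpoly n h0 h z = 0 \<longrightarrow> cmod z = 1)"
  then have pos: "\<And>z. cmod z < 1 \<Longrightarrow> Re (Hpoly n h0 h z) > 0"
    and hn: "h n = complex_of_real (h0 / 2)"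
    using Hpoly_top_coeff_if_roots_unimodular[OF assms] by auto
  have "\<forall>z. cmod z = 1 \<longrightarrow> 0 \<le> Re (Hpoly n h0 h z)"
    using Re_Hpoly_nonneg_on_circle pos by blast
  then have "\<And>m. 1 \<le> m \<Longrightarrow> m < n \<Longrightarrow> h m = 0"
    using Hpoly_coeff_eq_0 hn by blast
  then show "\<forall>z. Hpoly n h0 h z = complex_of_real h0 * (1 + z ^ n)"
    using Hpoly_eq_if_coeffs[where h = h, OF assms(1) hn] by blast
next
  assume eq: "\<forall>z. Hpoly n h0 h z = complex_of_real h0 * (1 + z ^ n)"
  have hn: "h n = complex_of_real (h0 / 2)"
    using Hpoly_top_coeff_if_eq[OF assms(1) eq[rule_format]] .
  have "Im (h n) = 0 \<and> Re (h n) > 0"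
    unfolding hn using assms(2) by simp
  moreover have "Re (Hpoly n h0 h z) > 0" if "cmod z < 1" for z
    using Re_one_plus_power_pos[of n z] that eq assms by simp
  moreover have "cmod z = 1" if "Hpoly n h0 h z = 0" for z
    using that eq assms(2) by (simp add: norm_eq_1_if_power_eq_minus_1 add_eq_0_iff)
  ultimately show "(\<forall>z. cmod z < 1 \<longrightarrow> Re (Hpoly n h0 h z) > 0)
          \<and> Im (h n) = 0 \<and> Re (h n) > 0
          \<and> (\<forall>z. Hpoly n h0 h z = 0 \<longrightarrow> cmod z = 1)"
    by auto
qed

end
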